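(* Let $M\in\mathrm{SL}(3,\mathbb R)$, $\mathcal D=\mathbb S_1^1$, $K=\mathcal G_{\mathcal D}(M)$, and let $(u_1,\vec v_1),\dots,(u_K,\vec v_K)\in\mathcal Q_{\mathcal D}(M)$ satisfy (V1)–(V3) and $u_i\ge0$ for all $i$. Then for all $1\le i<j\le K-1$ the angle between $\vec v_i$ and $\vec v_j$ is greater than $\pi/3$. Moreover, for all $1\le i<j<k\le K-1$, the vector $\vec v_i$ does not lie in the positive cone $\{a\vec v_j+b\vec v_k: a,b\ge0\}$ determined by $\vec v_j$ and $\vec v_k$.
   Context: Row vectors in $\mathbb R^3$ are written $(u,\vec v)$, $u\in\mathbb R$, $\vec v\in\mathbb R^2$; $\mathbb Z^3M=\{\vec mM:\vec m\in\mathbb Z^3\}$. For $\mathcal D\subseteq\mathbb S_1^1$ (unit circle): $\mathcal Q_{\mathcal D}(M,t)=\{(u,\vec v)\in\mathbb Z^3M:-t<u<1-t,\ \vec v\in\mathbb R_{>0}\mathcal D\}$ for $t\in(0,1)$; $\mathcal Q_{\mathcal D}(M)=\{(u,\vec v)\in\mathbb Z^3M:|u|<1,\ \vec v\in\mathbb R_{>0}\mathcal D\}$; $F_{\mathcal D}(M,t)=\min\{|\vec v|:(u,\vec v)\in\mathcal Q_{\mathcal D}(M,t)\}$; $\mathcal F_{\mathcal D}(M)=\{F_{\mathcal D}(M,t):0<t<1\}$ and $\mathcal G_{\mathcal D}(M)=|\mathcal F_{\mathcal D}(M)|$. Conditions: (V1) $0<|\vec v_1|<\cdots<|\vec v_K|$;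 (V2) each $\delta\in\mathcal F_{\mathcal D}(M)$ equals $|\vec v_i|$ for some $i$; (V3) for each $i$ there is $t\in(0,1)$ with $(u_i,\vec v_i)\in\mathcal Q_{\mathcal D}(M,t)$ and $|\vec v_i|=F_{\mathcal D}(M,t)$. *)

theory Defs
  imports "HOL-Analysis.Analysis"
begin

definition split3 :: "real^3 \<Rightarrow> real \<times> (real^2)" where
  "split3 x = (x $ 1, vector [x $ 2, x $ 3])"

definition lat :: "real^3^3 \<Rightarrow> (real \<times> (real^2)) set" where
  "lat M = {split3 (m v* M) | m. \<forall>i. m $ i \<in> \<int>}"

definition pcone :: "(real^2) set \<Rightarrow> (real^2) set" where
  "pcone D = {c *\<^sub>R d | c d. c > 0 \<and> d \<in> D}"

definition QDt :: "(real^2) set \<Rightarrow> real^3^3 \<Rightarrow> real \<Rightarrow> (real \<times> (real^2)) set" where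
  "QDt D M t = {(u, v) \<in> lat M. - t < u \<and> u < 1 - t \<and> v \<in> pcone D}"

definition QD :: "(real^2) set \<Rightarrow> real^3^3 \<Rightarrow> (real \<times> (real^2)) set" where
  "QD D M = {(u, v) \<in> lat M. \<bar>u\<bar> < 1 \<and> v \<in> pcone D}"

text \<open>F_D(M,t) = min of |v| over Q_D(M,t) (the minimum is attained; we write it as Inf).\<close>
definition FD :: "(real^2) set \<Rightarrow> real^3^3 \<Rightarrow> real \<Rightarrow> real" where
  "FD D M t = Inf ((\<lambda>(u, v). norm v) ` QDt D M t)"

definition FDset :: "(real^2) set \<Rightarrow> real^3^3 \<Rightarrow> real set" where
  "FDset D M = {FD D M t | t. 0 < t \<and> t < 1}"

definition GD :: "(real^2) set \<Rightarrow> real^3^3 \<Rightarrow> nat" where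
  "GD D M = card (FDset D M)"

definition vangle :: "real^2 \<Rightarrow> real^2 \<Rightarrow> real" where
  "vangle x y = arccos ((x \<bullet> y) / (norm x * norm y))"

end

theory Submission
  imports Defs
begin

text \<open>If \<open>v n\<close> realises \<open>F(M, t n)\<close>, every nonzero lattice vector \<open>(u, w)\<close> with \<open>u\<close> in the
  window \<open>(-t n, 1 - t n)\<close>, or by symmetry of the lattice in \<open>(t n - 1, t n)\<close>, is at least as
  long as \<open>v n\<close>. As \<open>|v m| < |v n|\<close> for \<open>m < n\<close> and \<open>u m \<ge> 0\<close>, this forces
  \<open>u m \<ge> max (t n) (1 - t n) \<ge> 1/2\<close>, and \<open>u n < 1 - t n \<le> u m\<close>. So for \<open>i < j < K\<close> the
  difference \<open>(u i - u j, v i - v j)\<close> has first coordinate in \<open>[0, 1/2)\<close> and is longer than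
  every \<open>v k\<close>, \<open>k < K\<close>. An angle of at most \<open>pi/3\<close> between \<open>v i\<close> and \<open>v j\<close> would make
  \<open>v i - v j\<close> shorter than \<open>v j\<close>. If \<open>v i\<close> were in the cone of \<open>v j\<close> and \<open>v k\<close>, then
  \<open>v i - v j\<close>, \<open>v i - v k\<close> and \<open>v j + v k - v i\<close> (the last one lying in the window of
  \<open>v k\<close>) would all be at least as long as \<open>v k\<close>, and an elementary estimate on the Gram form of
  \<open>v j\<close>, \<open>v k\<close> shows that this is impossible.\<close>

lemma split3_diff: "split3 (x - y) = split3 x - split3 y"
  by (simp add: split3_def vec_eq_iff forall_2)

lemma lat_diff:
  assumes "p \<in> lat M" "q \<in> lat M"
  shows "p - q \<in> lat M"
proof -
  obtain m n where "\<forall>i. m $ i \<in> \<int>" "p = split3 (m v* M)" "\<forall>i. n $ i \<in> \<int>" "q = split3 (n v* M)"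
    using assms unfolding lat_def by blast
  then have "p - q = split3 ((m - n) v* M)" "\<forall>i. (m - n) $ i \<in> \<int>"
    by (simp_all add: vector_matrix_mult_diff_distrib split3_diff)
  then show ?thesis
    unfolding lat_def by blast
qed

lemma lat_uminus:
  assumes "p \<in> lat M"
  shows "- p \<in> lat M"
  using lat_diff[OF lat_diff[OF assms assms] assms] by simp

lemma lat_add:
  assumes "p \<in> lat M" "q \<in> lat M"
  shows "p + q \<in> lat M"
  using lat_diff[OF assms(1) lat_uminus[OF assms(2)]] by simp

lemma pcone_sphere_iff: "w \<in> pcone (sphere 0 1) \<longleftrightarrow> w \<noteq> 0"
proof
  assume "w \<in> pcone (sphere 0 1)"
  then show "w \<noteq> 0"
    unfolding pcone_def by auto
next
  assume "w \<noteq> 0"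
  then have "w = norm w *\<^sub>R (w /\<^sub>R norm w) \<and> 0 < norm w \<and> w /\<^sub>R norm w \<in> sphere 0 1"
    by simp
  then show "w \<in> pcone (sphere 0 1)"
    unfolding pcone_def by blast
qed

lemma FD_le_norm:
  assumes "(u, w) \<in> QDt D M t"
  shows "FD D M t \<le> norm w"
  unfolding FD_def
proof (rule cInf_lower)
  show "norm w \<in> (\<lambda>(u, w). norm w) ` QDt D M t"
    using assms by force
  show "bdd_below ((\<lambda>(u, w). norm w) ` QDt D M t)"
    by (rule bdd_belowI[where m = 0]) auto
qed

lemma FD_sphere_le_norm:
  assumes "(u, w) \<in> lat M" "w \<noteq> 0" "- t < u" "u < 1 - t"
  shows "FD (sphere 0 1) M t \<le> norm w"
  using assms by (intro FD_le_norm[of u]) (simp add: QDt_def pcone_sphere_iff)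

text \<open>The lattice is symmetric, so the window \<open>-t < u < 1 - t\<close> may be replaced by its
  reflection \<open>t - 1 < u < t\<close>; for \<open>u \<ge> 0\<close> the two together cover \<open>u < max t (1 - t)\<close>.\<close>

lemma FD_sphere_le_norm_nonneg:
  assumes "(u, w) \<in> lat M" "w \<noteq> 0" "0 \<le> u" "0 < t" "t < 1" "u < max t (1 - t)"
  shows "FD (sphere 0 1) M t \<le> norm w"
proof (cases "u < 1 - t")
  case True
  then show ?thesis
    using assms by (intro FD_sphere_le_norm) auto
next
  case False
  have "(- u, - w) \<in> lat M"
    using lat_uminus[OF assms(1)] by simp
  then have "FD (sphere 0 1) M t \<le> norm (- w)"
    using False assms by (intro FD_sphere_le_norm) auto
  then show ?thesis
    by simp
qed

lemma vangle_gt_pi_div_3: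
  fixes x y :: "real^2"
  assumes "0 < norm x" "norm x < norm y" "norm y \<le> norm (x - y)"
  shows "pi / 3 < vangle x y"
proof -
  define r where "r = (x \<bullet> y) / (norm x * norm y)"
  have "norm y ^ 2 \<le> norm (x - y) ^ 2"
    using assms(3) by (simp add: power_mono)
  also have "\<dots> = norm x ^ 2 + norm y ^ 2 - 2 * (x \<bullet> y)"
    by (simp add: power2_norm_eq_inner inner_diff_left inner_diff_right inner_commute)
  finally have "2 * (x \<bullet> y) \<le> norm x ^ 2"
    by simp
  also have "\<dots> < norm x * norm y"
    using assms by (simp add: power2_eq_square)
  finally have "r < 1 / 2"
    using assms unfolding r_def by (simp add: divide_less_eq not_less)
  moreover have "- 1 \<le> r"
    using Cauchy_Schwarz_ineq2[of x y] assms unfolding r_def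
    by (simp add: le_divide_eq abs_le_iff)
  ultimately have "arccos (1 / 2) < arccos r"
    by (intro arccos_less_arccos) auto
  then show ?thesis
    by (simp add: vangle_def r_def)
qed

text \<open>\<open>q\<close> is the quadratic form with Gram matrix \<open>[[X, c], [c, Y]]\<close> of two vectors \<open>x\<close>, \<open>y\<close>:
  \<open>q a b\<close>, \<open>q (a - 1) b\<close>, \<open>q a (b - 1)\<close> and \<open>q (a - 1) (b - 1)\<close> are the squared distances
  of \<open>a x + b y\<close> from \<open>0\<close>, \<open>x\<close>, \<open>y\<close> and \<open>x + y\<close>.\<close>

context
  fixes X c Y :: real and q :: "real \<Rightarrow> real \<Rightarrow> real"
  assumes q_eq: "\<And>s t. q s t = s\<^sup>2 * X + 2 * s * t * c + t\<^sup>2 * Y"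
begin

lemma gram_shift_a_ineq:
  assumes "1 \<le> a" "q a b < X" "Y < q (a - 1) b"
  shows "(a - 1)\<^sup>2 * X < (b\<^sup>2 - a) * Y"
proof -
  have "a * Y < a * q (a - 1) b"
    using assms by simp
  moreover have "(a - 1) * q a b \<le> (a - 1) * X"
    using assms by (intro mult_left_mono) auto
  moreover have "a * q (a - 1) b - (a - 1) * q a b = b\<^sup>2 * Y - a * (a - 1) * X"
    unfolding q_eq by (simp add: algebra_simps power2_eq_square)
  ultimately show ?thesis
    by (simp add: algebra_simps power2_eq_square)
qed

lemma gram_shift_b_ineq:
  assumes "1 \<le> b" "q a b < X" "Y < q a (b - 1)"
  shows "b\<^sup>2 * Y < (a\<^sup>2 + b - 1) * X"
proof -
  have "b * Y < b * q a (b - 1)"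
    using assms by simp
  moreover have "(b - 1) * q a b \<le> (b - 1) * X"
    using assms by (intro mult_left_mono) auto
  moreover have "b * q a (b - 1) - (b - 1) * q a b = a\<^sup>2 * X - b * (b - 1) * Y"
    unfolding q_eq by (simp add: algebra_simps power2_eq_square)
  ultimately show ?thesis
    by (simp add: algebra_simps power2_eq_square)
qed

lemma gram_shift_ab_ineq:
  assumes "1 < a" "1 < b" "q a b < X" "Y \<le> q (a - 1) (b - 1)"
  shows "0 < (a * (a - 1) * (a - b) + (a - 1) * (b - 1)) * X + (b * (b - 1) * (b - a) - a * b) * Y"
proof -
  have "a * b * Y \<le> a * b * q (a - 1) (b - 1)"
    using assms by (intro mult_left_mono) auto
  moreover have "(a - 1) * (b - 1) * q a b < (a - 1) * (b - 1) * X"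
    using assms by (intro mult_strict_left_mono) auto
  moreover have "a * b * q (a - 1) (b - 1) - (a - 1) * (b - 1) * q a b
      = a * (a - 1) * (a - b) * X + b * (b - 1) * (b - a) * Y"
    unfolding q_eq by (simp add: algebra_simps power2_eq_square)
  ultimately show ?thesis
    by (simp add: algebra_simps)
qed

text \<open>Inside the unit square, \<open>q\<close> at the four corners of the cell around \<open>(a, b)\<close> interpolates
  bilinearly to \<open>a (1 - a) X + b (1 - b) Y\<close>, which is too small if three corners exceed \<open>Y\<close>.\<close>

lemma gram_corner_less_unit_square:
  assumes "0 \<le> a" "a \<le> 1" "0 \<le> b" "b \<le> 1" "0 < Y" "X \<le> Y"
    and "0 \<le> q a b" "Y < q (a - 1) b" "Y < q a (b - 1)"
  shows "q (a - 1) (b - 1) < Y"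
proof (rule ccontr)
  assume "\<not> q (a - 1) (b - 1) < Y"
  then have "a * b * Y \<le> a * b * q (a - 1) (b - 1)"
    using assms by (intro mult_left_mono) auto
  moreover have "a * (1 - b) * Y \<le> a * (1 - b) * q (a - 1) b"
    using assms by (intro mult_left_mono) auto
  moreover have "(1 - a) * b * Y \<le> (1 - a) * b * q a (b - 1)"
    using assms by (intro mult_left_mono) auto
  moreover have "0 \<le> (1 - a) * (1 - b) * q a b"
    using assms by simp
  moreover have "a * (1 - a) * X \<le> a * (1 - a) * Y"
    using assms by (intro mult_left_mono) auto
  moreover have "(1 - a) * (1 - b) * q a b + a * (1 - b) * q (a - 1) b + (1 - a) * b * q a (b - 1)
      + a * b * q (a - 1) (b - 1) = a * (1 - a) * X + b * (1 - b) * Y"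
    unfolding q_eq by (simp add: algebra_simps power2_eq_square)
  ultimately have "((a - b)\<^sup>2 + a * b) * Y \<le> 0"
    by (simp add: algebra_simps power2_eq_square)
  then have "(a - b)\<^sup>2 + a * b \<le> 0"
    using \<open>0 < Y\<close> by (simp add: mult_le_0_iff)
  moreover have "0 \<le> a * b"
    using assms by simp
  ultimately have "(a - b)\<^sup>2 = 0" "a * b = 0"
    by (smt (verit) zero_le_power2)+
  then have "a = 0" "b = 0"
    by auto
  then show False
    using assms unfolding q_eq by simp
qed

lemma gram_corner_less_b_le_a:
  assumes "b \<le> a" "1 < b" "a < b\<^sup>2" "0 < Y"
    and "q a b < X" "Y < q (a - 1) b"
  shows "q (a - 1) (b - 1) < Y"
proof (rule ccontr)
  assume "\<not> q (a - 1) (b - 1) < Y"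
  define C where "C = a * (a - b) + b - 1"
  define E where "E = a * b + b * (b - 1) * (a - b)"
  have "1 < a" "0 \<le> a * (a - b)"
    using assms by auto
  then have "0 < C"
    using assms unfolding C_def by linarith
  have "C * ((a - 1)\<^sup>2 * X) < C * ((b\<^sup>2 - a) * Y)"
    using gram_shift_a_ineq[of a b] assms \<open>1 < a\<close> \<open>0 < C\<close> by (intro mult_strict_left_mono) auto
  moreover have "(a - 1) * (E * Y) < (a - 1) * ((a - 1) * C * X)"
    using gram_shift_ab_ineq[of a b] assms \<open>1 < a\<close> \<open>\<not> q (a - 1) (b - 1) < Y\<close>
    unfolding C_def E_def by (intro mult_strict_left_mono) (auto simp: algebra_simps)
  ultimately have "(a - 1) * E * Y < C * (b\<^sup>2 - a) * Y"
    by (simp add: algebra_simps power2_eq_square)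
  then have "(a - 1) * E < C * (b\<^sup>2 - a)"
    using \<open>0 < Y\<close> by simp
  moreover have "(a - 1) * E - C * (b\<^sup>2 - a)
      = b * (b - 1) + (a - b) * (b\<^sup>2 + b - 1) + 2 * b * (a - b)\<^sup>2 + (a - b) ^ 3"
    unfolding C_def E_def by (simp add: algebra_simps power2_eq_square power3_eq_cube)
  moreover have "0 \<le> b * (b - 1) + (a - b) * (b\<^sup>2 + b - 1) + 2 * b * (a - b)\<^sup>2 + (a - b) ^ 3"
    using assms by (simp add: power2_eq_square)
  ultimately show False
    by linarith
qed

lemma gram_corner_less_a_le_b:
  assumes "a \<le> b" "1 < a" "b \<le> a + 1" "0 < X" "X < Y"
    and "q a b < X"
  shows "q (a - 1) (b - 1) < Y"
proof (rule ccontr)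
  assume "\<not> q (a - 1) (b - 1) < Y"
  define \<alpha> where "\<alpha> = a * (a - 1) * (a - b) + (a - 1) * (b - 1)"
  define \<beta> where "\<beta> = b * (b - 1) * (b - a) - a * b"
  have "0 < \<alpha> * X + \<beta> * Y"
    using gram_shift_ab_ineq[of a b] assms \<open>\<not> q (a - 1) (b - 1) < Y\<close> unfolding \<alpha>_def \<beta>_def by auto
  have "\<bar>a - b\<bar> \<le> 1"
    using assms by simp
  then have "(a - b)\<^sup>2 \<le> 1"
    using abs_le_square_iff[of "a - b" 1] by simp
  then have "(a + b - 1) * ((a - b)\<^sup>2 - 1) \<le> 0"
    using assms by (intro mult_nonneg_nonpos) auto
  moreover have "\<alpha> + \<beta> = (a + b - 1) * ((a - b)\<^sup>2 - 1)"
    unfolding \<alpha>_def \<beta>_def by (simp add: algebra_simps power2_eq_square)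
  ultimately have "\<alpha> + \<beta> \<le> 0"
    by simp
  have "b * (b - 1) * (b - a) \<le> b * (b - 1)"
    using assms by (simp add: mult_left_le)
  also have "\<dots> \<le> b * a"
    using assms by (intro mult_left_mono) auto
  finally have "\<beta> \<le> 0"
    unfolding \<beta>_def by (simp add: algebra_simps)
  have "\<alpha> * X + \<beta> * Y \<le> 0"
  proof (cases "0 \<le> \<alpha>")
    case True
    then have "\<alpha> * X \<le> \<alpha> * Y"
      using assms by (intro mult_left_mono) auto
    moreover have "(\<alpha> + \<beta>) * Y \<le> 0"
      using \<open>\<alpha> + \<beta> \<le> 0\<close> assms by (simp add: mult_nonpos_nonneg)
    ultimately show ?thesis
      by (simp add: algebra_simps)
  next
    case False
    then show ?thesis
      using \<open>\<beta> \<le> 0\<close> assms by (smt (verit) mult_neg_pos mult_nonpos_nonneg)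
  qed
  then show False
    using \<open>0 < \<alpha> * X + \<beta> * Y\<close> by linarith
qed

lemma gram_corner_less:
  assumes "0 \<le> a" "0 \<le> b" "0 < X" "X < Y" "0 \<le> q a b"
    and "q a b < X" "Y < q (a - 1) b" "Y < q a (b - 1)"
  shows "q (a - 1) (b - 1) < Y"
proof -
  consider "a \<le> 1" "b \<le> 1" | "1 \<le> a" "b\<^sup>2 \<le> a" | "1 \<le> b" "a\<^sup>2 + b - 1 \<le> b\<^sup>2"
    | "b \<le> a" "1 < b" "a < b\<^sup>2" | "a \<le> b" "1 < a" "b \<le> a + 1"
  proof -
    have "b\<^sup>2 \<le> a" if "1 \<le> a" "b \<le> 1"
      using that assms power_le_one[of b 2] by linarith
    moreover have "a\<^sup>2 + b - 1 \<le> b\<^sup>2" if "1 \<le> b" "a \<le> 1"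
    proof -
      have "a\<^sup>2 \<le> 1"
        using that assms by (simp add: power_le_one)
      moreover have "b * 1 \<le> b * b"
        using that by (intro mult_left_mono) auto
      ultimately show ?thesis
        by (simp add: power2_eq_square)
    qed
    moreover have "a\<^sup>2 + b - 1 \<le> b\<^sup>2" if "a + 1 \<le> b"
      using that assms mult_mono[of "a + 1" b a "b - 1"] by (simp add: algebra_simps power2_eq_square)
    ultimately show thesis
      using that by (smt (verit))
  qed
  then show ?thesis
  proof cases
    case 1
    then show ?thesis
      using assms by (intro gram_corner_less_unit_square) auto
  next
    case 2
    then have "(a - 1)\<^sup>2 * X < (b\<^sup>2 - a) * Y"
      using assms by (intro gram_shift_a_ineq) auto
    moreover have "(b\<^sup>2 - a) * Y \<le> 0"
      using 2 assms by (intro mult_nonpos_nonneg) auto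
    moreover have "0 \<le> (a - 1)\<^sup>2 * X"
      using assms by simp
    ultimately show ?thesis
      by linarith
  next
    case 3
    then have "b\<^sup>2 * Y < (a\<^sup>2 + b - 1) * X"
      using assms by (intro gram_shift_b_ineq) auto
    moreover have "(a\<^sup>2 + b - 1) * X \<le> b\<^sup>2 * Y"
      using 3 assms by (smt (verit) mult_mono zero_le_power2)
    ultimately show ?thesis
      by linarith
  next
    case 4
    then show ?thesis
      using assms by (intro gram_corner_less_b_le_a) auto
  next
    case 5
    then show ?thesis
      using assms by (intro gram_corner_less_a_le_b) auto
  qed
qed

end

lemma norm_sum_minus_cone_point_less:
  fixes x y :: "'a::real_inner"
  assumes "0 \<le> a" "0 \<le> b" "norm (a *\<^sub>R x + b *\<^sub>R y) < norm x" "norm x < norm y"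
    and "norm y < norm (a *\<^sub>R x + b *\<^sub>R y - x)" "norm y < norm (a *\<^sub>R x + b *\<^sub>R y - y)"
  shows "norm (x + y - (a *\<^sub>R x + b *\<^sub>R y)) < norm y"
proof -
  define q where "q s t = norm (s *\<^sub>R x + t *\<^sub>R y) ^ 2" for s t
  have q_eq: "q s t = s\<^sup>2 * (x \<bullet> x) + 2 * s * t * (x \<bullet> y) + t\<^sup>2 * (y \<bullet> y)" for s t
    unfolding q_def power2_norm_eq_inner
    by (simp add: inner_add_left inner_add_right inner_commute algebra_simps power2_eq_square)
  have norm_less_iff: "norm p < norm r \<longleftrightarrow> p \<bullet> p < r \<bullet> r" for p r :: 'a
    using abs_le_square_iff[of "norm r" "norm p"] by (simp add: not_le[symmetric] power2_norm_eq_inner)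
  have "a *\<^sub>R x + b *\<^sub>R y - x = (a - 1) *\<^sub>R x + b *\<^sub>R y"
    and "a *\<^sub>R x + b *\<^sub>R y - y = a *\<^sub>R x + (b - 1) *\<^sub>R y"
    and "norm (x + y - (a *\<^sub>R x + b *\<^sub>R y)) = norm ((a - 1) *\<^sub>R x + (b - 1) *\<^sub>R y)"
    by (simp_all add: algebra_simps norm_minus_commute)
  note norm_identities = this
  have "0 \<le> q a b" "q a b < x \<bullet> x" "x \<bullet> x < y \<bullet> y"
    and "y \<bullet> y < q (a - 1) b" "y \<bullet> y < q a (b - 1)"
    using assms norm_identities by (simp_all add: q_def norm_less_iff power2_norm_eq_inner)
  moreover have "0 < x \<bullet> x"
    using le_less_trans[OF norm_ge_zero assms(3)] by simp
  ultimately have "q (a - 1) (b - 1) < y \<bullet> y"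
    using gram_corner_less[of q, OF q_eq] assms by blast
  then show ?thesis
    using norm_identities by (simp add: q_def norm_less_iff power2_norm_eq_inner)
qed

locale FD_minimal_vectors =
  fixes M :: "real^3^3" and K :: nat and u :: "nat \<Rightarrow> real" and v :: "nat \<Rightarrow> real^2"
    and t :: "nat \<Rightarrow> real"
  assumes in_QDt: "n \<in> {1..K} \<Longrightarrow> (u n, v n) \<in> QDt (sphere 0 1) M (t n)"
    and norm_eq_FD: "n \<in> {1..K} \<Longrightarrow> norm (v n) = FD (sphere 0 1) M (t n)"
    and t_pos: "n \<in> {1..K} \<Longrightarrow> 0 < t n"
    and t_less_1: "n \<in> {1..K} \<Longrightarrow> t n < 1"
    and norm_strict_mono: "1 \<le> m \<Longrightarrow> m < n \<Longrightarrow> n \<le> K \<Longrightarrow> norm (v m) < norm (v n)"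
    and u_nonneg: "n \<in> {1..K} \<Longrightarrow> 0 \<le> u n"
begin

lemma in_lat: "n \<in> {1..K} \<Longrightarrow> (u n, v n) \<in> lat M"
  and v_nonzero: "n \<in> {1..K} \<Longrightarrow> v n \<noteq> 0"
  and u_less: "n \<in> {1..K} \<Longrightarrow> u n < 1 - t n"
  using in_QDt by (auto simp: QDt_def pcone_sphere_iff)

lemma norm_le_lattice_vector:
  assumes "n \<in> {1..K}" "(u', w) \<in> lat M" "w \<noteq> 0" "0 \<le> u'" "u' < max (t n) (1 - t n)"
  shows "norm (v n) \<le> norm w"
  using FD_sphere_le_norm_nonneg[OF assms(2-4)] assms norm_eq_FD t_pos t_less_1 by auto

lemma u_ge_max:
  assumes "1 \<le> m" "m < n" "n \<le> K"
  shows "max (t n) (1 - t n) \<le> u m"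
proof (rule ccontr)
  assume "\<not> max (t n) (1 - t n) \<le> u m"
  then have "norm (v n) \<le> norm (v m)"
    using assms by (intro norm_le_lattice_vector[of n "u m"] in_lat v_nonzero u_nonneg) auto
  then show False
    using norm_strict_mono[OF assms] by simp
qed

lemma u_ge_half: "1 \<le> m \<Longrightarrow> m < K \<Longrightarrow> 1 / 2 \<le> u m"
  using u_ge_max[of m K] by linarith

lemma u_strict_antimono: "1 \<le> m \<Longrightarrow> m < n \<Longrightarrow> n \<le> K \<Longrightarrow> u n < u m"
  using u_ge_max[of m n] u_less[of n] by fastforce

lemma u_less_1: "n \<in> {1..K} \<Longrightarrow> u n < 1"
  using u_less t_pos by fastforce

lemma norm_less_norm_diff:
  assumes "1 \<le> i" "i < j" "j < K" "1 \<le> k" "k < K"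
  shows "norm (v k) < norm (v i - v j)"
proof -
  have "(u i - u j, v i - v j) \<in> lat M"
    using lat_diff[OF in_lat[of i] in_lat[of j]] assms by simp
  moreover have "v i - v j \<noteq> 0"
    using norm_strict_mono[of i j] assms by auto
  moreover have "0 \<le> u i - u j" "u i - u j < max (t K) (1 - t K)"
    using u_strict_antimono[of i j] u_ge_half[of j] u_less_1[of i] assms by auto
  ultimately have "norm (v K) \<le> norm (v i - v j)"
    using assms by (intro norm_le_lattice_vector) auto
  then show ?thesis
    using norm_strict_mono[of k K] assms by simp
qed

lemma norm_le_norm_sum_diff:
  assumes "1 \<le> i" "i < j" "j < k" "k < K"
  shows "norm (v k) \<le> norm (v j + v k - v i)"
proof (cases "v j + v k - v i = 0")
  case True
  then have "v i - v j = v k"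
    by (simp add: algebra_simps)
  then show ?thesis
    using norm_less_norm_diff[of i j k] assms by simp
next
  case False
  have "(u j + u k - u i, v j + v k - v i) \<in> lat M"
    using lat_diff[OF lat_add[OF in_lat[of j] in_lat[of k]] in_lat[of i]] assms by simp
  moreover have "0 \<le> u j + u k - u i" "u j + u k - u i < max (t k) (1 - t k)"
    using u_ge_half[of j] u_ge_half[of k] u_less_1[of i] u_strict_antimono[of i j] u_less[of k]
      assms by auto
  ultimately show ?thesis
    using False assms by (intro norm_le_lattice_vector) auto
qed

lemma vangle_gt: "1 \<le> i \<Longrightarrow> i < j \<Longrightarrow> j < K \<Longrightarrow> pi / 3 < vangle (v i) (v j)"
  using vangle_gt_pi_div_3 norm_less_norm_diff[of i j j] norm_strict_mono[of i j] v_nonzero[of i]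
  by force

lemma not_in_cone:
  assumes "1 \<le> i" "i < j" "j < k" "k < K"
  shows "v i \<notin> {a *\<^sub>R v j + b *\<^sub>R v k | a b. 0 \<le> a \<and> 0 \<le> b}"
proof
  assume "v i \<in> {a *\<^sub>R v j + b *\<^sub>R v k | a b. 0 \<le> a \<and> 0 \<le> b}"
  then obtain a b where "0 \<le> a" "0 \<le> b" and v_i: "v i = a *\<^sub>R v j + b *\<^sub>R v k"
    by blast
  have "norm (v j + v k - v i) < norm (v k)"
    unfolding v_i using assms \<open>0 \<le> a\<close> \<open>0 \<le> b\<close>
    by (intro norm_sum_minus_cone_point_less)
      (auto simp flip: v_i intro: norm_strict_mono norm_less_norm_diff)
  then show False
    using norm_le_norm_sum_diff[OF assms] by simp
qed

end

text \<open>Only (V1), (V3) and \<open>u i \<ge> 0\<close> are needed: the conclusion holds for every such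
  sequence, whether or not \<open>K = GD (sphere 0 1) M\<close>.\<close>

theorem proposition5p3:
  fixes M :: "real^3^3" and K :: nat and u :: "nat \<Rightarrow> real" and v :: "nat \<Rightarrow> real^2"
  assumes detM: "det M = 1"
    and K: "K = GD (sphere 0 1) M"
    and inQ: "\<forall>i\<in>{1..K}. (u i, v i) \<in> QD (sphere 0 1) M"
    and V1: "(\<forall>i\<in>{1..K}. 0 < norm (v i)) \<and> (\<forall>i j. 1 \<le> i \<and> i < j \<and> j \<le> K \<longrightarrow> norm (v i) < norm (v j))"
    and V2: "\<forall>\<delta>\<in>FDset (sphere 0 1) M. \<exists>i\<in>{1..K}. \<delta> = norm (v i)"
    and V3: "\<forall>i\<in>{1..K}. \<exists>t. 0 < t \<and> t < 1 \<and> (u i, v i) \<in> QDt (sphere 0 1) M t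
                 \<and> norm (v i) = FD (sphere 0 1) M t"
    and upos: "\<forall>i\<in>{1..K}. u i \<ge> 0"
  shows "(\<forall>i j. 1 \<le> i \<and> i < j \<and> j \<le> K - 1 \<longrightarrow> vangle (v i) (v j) > pi / 3)
       \<and> (\<forall>i j k. 1 \<le> i \<and> i < j \<and> j < k \<and> k \<le> K - 1 \<longrightarrow>
            v i \<notin> {a *\<^sub>R v j + b *\<^sub>R v k | a b. a \<ge> 0 \<and> b \<ge> 0})"
proof -
  obtain t where "\<forall>n\<in>{1..K}. 0 < t n \<and> t n < 1 \<and> (u n, v n) \<in> QDt (sphere 0 1) M (t n)
      \<and> norm (v n) = FD (sphere 0 1) M (t n)"
    using bchoice[OF V3] by blast
  then interpret FD_minimal_vectors M K u v t
    using V1 upos by unfold_locales auto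
  show ?thesis
    using vangle_gt not_in_cone by auto
qed

end
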